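(* Consider an episodic RMDP with $\mathcal{S}\times\mathcal{A}$-rectangular robust sets, and let $\pi^\star$ be an optimal robust policy. For any Markov policy $\pi$ and any $s\in\mathcal{S}$, $$V^{\pi^\star}_{1,P^\star,\boldsymbol{\Phi}}(s)-V^{\pi}_{1,P^\star,\boldsymbol{\Phi}}(s)\ge\mathbb{E}_{(P^{\pi^\star,\dagger},\pi^\star)}\Big[\sum_{h=1}^H\sum_{a\in\mathcal{A}}\big(\pi^\star_h(a|s_h)-\pi_h(a|s_h)\big)Q^\pi_{h,P^\star,\boldsymbol{\Phi}}(s_h,a)\ \Big|\ s_1=s\Big],$$ where the expectation is over trajectories generated by the policy $\pi^\star$ and the transition kernels $P^{\pi^\star,\dagger}$.
   Context: An episodic RMDP $(\mathcal{S},\mathcal{A},H,P^\star,R,\boldsymbol{\Phi})$ has finite $\mathcal{S},\mathcal{A}$, nominal kernels $P^\star_h$, rewards $R_h\in[0,1]$. $\mathcal{S}\times\mathcal{A}$-rectangularity: $\boldsymbol{\Phi}(P_h)=\bigotimes_{(s,a)}\mathcal{P}(s,a;P_h)$ with $\mathcal{P}(s,a;P_h)\subseteq\Delta(\mathcal{S})$. Robust value functions of a Markov policy: $V^\pi_{h,P^\star,\boldsymbol{\Phi}}(s)$ and $Q^\pi_{h,P^\star,\boldsymbol{\Phi}}(s,a)$ are the infima, over all $\widetilde P_i(\cdot|s',a')\in\mathcal{P}(s',a';P^\star_i)$, of the expected $\sum_{i=h}^HR_i(s_i,a_i)$ under $\pi$ starting from $s_h=s$ (resp. $(s_h,a_h)=(s,a)$);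 $V_{H+1}\equiv0$. An optimal robust policy maximizes $V^\pi_{1,P^\star,\boldsymbol{\Phi}}(s)$ for all $s$. The kernel $P^{\pi^\star,\dagger}_h(\cdot|s,a)$ is a minimizer of $\mathbb{E}_{P}[V^{\pi^\star}_{h+1,P^\star,\boldsymbol{\Phi}}]$ over $P\in\mathcal{P}(s,a;P^\star_h)$ (assumed to exist). *)

theory Defs
  imports "HOL-Analysis.Analysis"
begin

text \<open>Episodic RMDP with finite state type 's and action type 'a, horizon H,
steps indexed 1..H.  Kernels: nat => 's => 'a => 's => real (time step, state,
action, next state).\<close>

definition is_dist :: "('x::finite \<Rightarrow> real) \<Rightarrow> bool" where
  "is_dist p \<longleftrightarrow> (\<forall>x. 0 \<le> p x) \<and> (\<Sum>x\<in>UNIV. p x) = 1"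

definition markov_policy :: "nat \<Rightarrow> (nat \<Rightarrow> 's::finite \<Rightarrow> 'a::finite \<Rightarrow> real) \<Rightarrow> bool" where
  "markov_policy H \<pi> \<longleftrightarrow> (\<forall>h\<in>{1..H}. \<forall>s. is_dist (\<pi> h s))"

definition kernel :: "nat \<Rightarrow> (nat \<Rightarrow> 's::finite \<Rightarrow> 'a::finite \<Rightarrow> 's \<Rightarrow> real) \<Rightarrow> bool" where
  "kernel H P \<longleftrightarrow> (\<forall>h\<in>{1..H}. \<forall>s a. is_dist (P h s a))"

function evalV :: "nat \<Rightarrow> (nat \<Rightarrow> 's::finite \<Rightarrow> 'a::finite \<Rightarrow> real)
   \<Rightarrow> (nat \<Rightarrow> 's \<Rightarrow> 'a \<Rightarrow> 's \<Rightarrow> real) \<Rightarrow> (nat \<Rightarrow> 's \<Rightarrow> 'a \<Rightarrow> real) \<Rightarrow> nat \<Rightarrow> 's \<Rightarrow> real" where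
  "evalV H R Pt \<pi> h s = (if H < h then 0 else
     (\<Sum>a\<in>UNIV. \<pi> h s a * (R h s a + (\<Sum>s'\<in>UNIV. Pt h s a s' * evalV H R Pt \<pi> (Suc h) s'))))"
  by pat_completeness auto
termination
  by (relation "Wellfounded.measure (\<lambda>(H, R, Pt, \<pi>, h, s). Suc H - h)") auto

definition evalQ :: "nat \<Rightarrow> (nat \<Rightarrow> 's::finite \<Rightarrow> 'a::finite \<Rightarrow> real)
   \<Rightarrow> (nat \<Rightarrow> 's \<Rightarrow> 'a \<Rightarrow> 's \<Rightarrow> real) \<Rightarrow> (nat \<Rightarrow> 's \<Rightarrow> 'a \<Rightarrow> real) \<Rightarrow> nat \<Rightarrow> 's \<Rightarrow> 'a \<Rightarrow> real" where
  "evalQ H R Pt \<pi> h s a = R h s a + (\<Sum>s'\<in>UNIV. Pt h s a s' * evalV H R Pt \<pi> (Suc h) s')"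

text \<open>S x A-rectangular adversarial kernels: at each step i and each (s,a), the
kernel row is chosen independently from the robust set U (Pstar i) s a.\<close>
definition adversaries :: "nat \<Rightarrow> (nat \<Rightarrow> 's::finite \<Rightarrow> 'a::finite \<Rightarrow> 's \<Rightarrow> real)
   \<Rightarrow> (('s \<Rightarrow> 'a \<Rightarrow> 's \<Rightarrow> real) \<Rightarrow> 's \<Rightarrow> 'a \<Rightarrow> ('s \<Rightarrow> real) set)
   \<Rightarrow> (nat \<Rightarrow> 's \<Rightarrow> 'a \<Rightarrow> 's \<Rightarrow> real) set" where
  "adversaries H Pstar U = {Pt. \<forall>i\<in>{1..H}. \<forall>s a. Pt i s a \<in> U (Pstar i) s a}"

definition robustV where
  "robustV H R Pstar U \<pi> h s = (INF Pt \<in> adversaries H Pstar U. evalV H R Pt \<pi> h s)"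

definition robustQ where
  "robustQ H R Pstar U \<pi> h s a = (INF Pt \<in> adversaries H Pstar U. evalQ H R Pt \<pi> h s a)"

text \<open>Distribution of the state s_{k+1} of a trajectory started at s_1 = s,
generated by policy \<pi> and kernels Pt.\<close>
primrec occ :: "(nat \<Rightarrow> 's::finite \<Rightarrow> 'a::finite \<Rightarrow> 's \<Rightarrow> real) \<Rightarrow> (nat \<Rightarrow> 's \<Rightarrow> 'a \<Rightarrow> real)
   \<Rightarrow> 's \<Rightarrow> nat \<Rightarrow> 's \<Rightarrow> real" where
  "occ Pt \<pi> s 0 y = (if y = s then 1 else 0)"
| "occ Pt \<pi> s (Suc k) y =
     (\<Sum>x\<in>UNIV. \<Sum>a\<in>UNIV. occ Pt \<pi> s k x * \<pi> (Suc k) x a * Pt (Suc k) x a y)"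

definition traj_exp where
  "traj_exp H Pt \<pi> s g = (\<Sum>h=1..H. \<Sum>y\<in>UNIV. occ Pt \<pi> s (h - 1) y * g h y)"

end

theory Submission
  imports Defs
begin

text \<open>By rectangularity, the robust value functions of a Markov policy obey the robust Bellman
recursion, in which the adversary minimises separately for every step and state-action pair;
since these infima need not be attained, the recursion is matched by adversaries that are worst
up to e at every step. In these terms the difference of the robust values of \<pi>star and \<pi> at
step h splits into the advantage term \<Sum>a. (\<pi>star - \<pi>) Q^\<pi> and \<Sum>a. \<pi>star (Q^\<pi>star - Q^\<pi>).
As Pdag is worst for \<pi>star but merely feasible for \<pi>, the latter is at least the
Pdag-expectation of the value difference at step h + 1. Unrolling this inequality along
trajectories of (Pdag, \<pi>star) gives the claim.\<close>

declare evalV.simps[simp del]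

lemma evalV_eq_sum_evalQ:
  "h \<le> H \<Longrightarrow> evalV H R Pt \<pi> h x = (\<Sum>a\<in>UNIV. \<pi> h x a * evalQ H R Pt \<pi> h x a)"
  by (subst evalV.simps) (simp add: evalQ_def)

lemma evalV_beyond_horizon: "H < h \<Longrightarrow> evalV H R Pt \<pi> h x = 0"
  by (subst evalV.simps) simp

lemma markov_policyD: "markov_policy H \<pi> \<Longrightarrow> h \<in> {1..H} \<Longrightarrow> is_dist (\<pi> h x)"
  unfolding markov_policy_def by blast

lemma is_dist_nonneg: "is_dist p \<Longrightarrow> 0 \<le> p x"
  unfolding is_dist_def by blast

lemma is_dist_sum_le_add_const:
  assumes "is_dist p" "\<And>y. f y \<le> g y + c"
  shows "(\<Sum>y\<in>UNIV. p y * f y) \<le> (\<Sum>y\<in>UNIV. p y * g y) + c"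
proof -
  have "(\<Sum>y\<in>UNIV. p y * f y) \<le> (\<Sum>y\<in>UNIV. p y * (g y + c))"
    using assms by (intro sum_mono mult_left_mono) (auto simp: is_dist_nonneg)
  also have "\<dots> = (\<Sum>y\<in>UNIV. p y * g y) + c"
    using assms(1) by (simp add: is_dist_def distrib_left sum.distrib flip: sum_distrib_right)
  finally show ?thesis .
qed

lemma cINF_eq_of_approx:
  fixes f :: "'b \<Rightarrow> real"
  assumes lower: "\<And>x. x \<in> A \<Longrightarrow> w \<le> f x"
    and approx: "\<And>e. 0 < e \<Longrightarrow> \<exists>x\<in>A. f x \<le> w + c * e"
  shows "(INF x\<in>A. f x) = w"
proof (rule antisym)
  have "A \<noteq> {}" using approx[of 1] by auto
  then show "w \<le> (INF x\<in>A. f x)" using lower by (rule cINF_greatest)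
  have bdd: "bdd_below (f ` A)" using lower by (rule bdd_belowI2)
  show "(INF x\<in>A. f x) \<le> w"
  proof (rule field_le_epsilon)
    fix e :: real assume "0 < e"
    then obtain x where x: "x \<in> A" "f x \<le> w + c * (e / (\<bar>c\<bar> + 1))"
      using approx[of "e / (\<bar>c\<bar> + 1)"] by auto
    have "c * e \<le> (\<bar>c\<bar> + 1) * e"
      using \<open>0 < e\<close> by (intro mult_right_mono) auto
    then have "c * (e / (\<bar>c\<bar> + 1)) \<le> e"
      by (simp add: divide_le_eq add_nonneg_pos mult.commute)
    then show "(INF x\<in>A. f x) \<le> w + e"
      using cINF_lower[OF bdd x(1)] x(2) by linarith
  qed
qed

locale robust_mdp =
  fixes H :: nat
    and R :: "nat \<Rightarrow> 's::finite \<Rightarrow> 'a::finite \<Rightarrow> real"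
    and Pstar :: "nat \<Rightarrow> 's \<Rightarrow> 'a \<Rightarrow> 's \<Rightarrow> real"
    and U :: "('s \<Rightarrow> 'a \<Rightarrow> 's \<Rightarrow> real) \<Rightarrow> 's \<Rightarrow> 'a \<Rightarrow> ('s \<Rightarrow> real) set"
  assumes reward_nonneg: "\<And>h x a. h \<in> {1..H} \<Longrightarrow> 0 \<le> R h x a"
    and robust_set_dist: "\<And>Q x a p. p \<in> U Q x a \<Longrightarrow> is_dist p"
    and robust_set_nonempty: "\<And>h x a. h \<in> {1..H} \<Longrightarrow> U (Pstar h) x a \<noteq> {}"
begin

function bellman_V :: "(nat \<Rightarrow> 's \<Rightarrow> 'a \<Rightarrow> real) \<Rightarrow> nat \<Rightarrow> 's \<Rightarrow> real" where
  "bellman_V \<pi> h x = (if H < h then 0 else (\<Sum>a\<in>UNIV. \<pi> h x a * (R h x a +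
      (INF p\<in>U (Pstar h) x a. \<Sum>y\<in>UNIV. p y * bellman_V \<pi> (Suc h) y))))"
  by pat_completeness auto
termination
  by (relation "Wellfounded.measure (\<lambda>(\<pi>, h, x). Suc H - h)") auto

declare bellman_V.simps[simp del]

definition bellman_Q :: "(nat \<Rightarrow> 's \<Rightarrow> 'a \<Rightarrow> real) \<Rightarrow> nat \<Rightarrow> 's \<Rightarrow> 'a \<Rightarrow> real" where
  "bellman_Q \<pi> h x a =
     R h x a + (INF p\<in>U (Pstar h) x a. \<Sum>y\<in>UNIV. p y * bellman_V \<pi> (Suc h) y)"

lemma bellman_V_eq_sum_bellman_Q:
  "h \<le> H \<Longrightarrow> bellman_V \<pi> h x = (\<Sum>a\<in>UNIV. \<pi> h x a * bellman_Q \<pi> h x a)"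
  by (subst bellman_V.simps) (simp add: bellman_Q_def)

lemma bellman_V_beyond_horizon: "H < h \<Longrightarrow> bellman_V \<pi> h x = 0"
  by (subst bellman_V.simps) simp

lemma adversary_row_dist:
  "Pt \<in> adversaries H Pstar U \<Longrightarrow> h \<in> {1..H} \<Longrightarrow> is_dist (Pt h x a)"
  unfolding adversaries_def using robust_set_dist by blast

lemma bellman_V_nonneg:
  assumes "markov_policy H \<pi>" "1 \<le> h"
  shows "0 \<le> bellman_V \<pi> h x"
  using assms(2)
proof (induction "Suc H - h" arbitrary: h x)
  case 0
  then show ?case by (simp add: bellman_V_beyond_horizon)
next
  case (Suc k)
  then have h: "h \<in> {1..H}" by auto
  have "0 \<le> bellman_Q \<pi> h x a" for a
    unfolding bellman_Q_def using Suc reward_nonneg[OF h] robust_set_nonempty[OF h]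
    by (intro add_nonneg_nonneg cINF_greatest sum_nonneg mult_nonneg_nonneg)
      (auto dest: robust_set_dist simp: is_dist_nonneg)
  then show ?case
    using h is_dist_nonneg[OF markov_policyD[OF assms(1) h]]
    by (auto simp: bellman_V_eq_sum_bellman_Q intro!: sum_nonneg)
qed

lemma bdd_below_robust_next_value:
  "markov_policy H \<pi> \<Longrightarrow>
     bdd_below ((\<lambda>p. \<Sum>y\<in>UNIV. p y * bellman_V \<pi> (Suc h) y) ` U (Pstar h) x a)"
  using bellman_V_nonneg[of \<pi> "Suc h"]
  by (intro bdd_belowI2[where m = 0] sum_nonneg mult_nonneg_nonneg)
    (auto dest: robust_set_dist simp: is_dist_nonneg)

lemma bellman_Q_le_of_mem:
  assumes "markov_policy H \<pi>" "p \<in> U (Pstar h) x a"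
  shows "bellman_Q \<pi> h x a \<le> R h x a + (\<Sum>y\<in>UNIV. p y * bellman_V \<pi> (Suc h) y)"
  unfolding bellman_Q_def using cINF_lower[OF bdd_below_robust_next_value assms(2)] assms(1)
  by simp

lemma bellman_Q_ge_of_minimal:
  assumes "h \<in> {1..H}"
    and "\<And>p. p \<in> U (Pstar h) x a \<Longrightarrow>
      (\<Sum>y\<in>UNIV. q y * bellman_V \<pi> (Suc h) y) \<le> (\<Sum>y\<in>UNIV. p y * bellman_V \<pi> (Suc h) y)"
  shows "R h x a + (\<Sum>y\<in>UNIV. q y * bellman_V \<pi> (Suc h) y) \<le> bellman_Q \<pi> h x a"
  unfolding bellman_Q_def
  using assms by (intro add_left_mono cINF_greatest[OF robust_set_nonempty])

lemma bellman_Q_le_evalQ_step: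
  assumes "Pt \<in> adversaries H Pstar U" "markov_policy H \<pi>" "h \<in> {1..H}"
    and "\<And>y. bellman_V \<pi> (Suc h) y \<le> evalV H R Pt \<pi> (Suc h) y"
  shows "bellman_Q \<pi> h x a \<le> evalQ H R Pt \<pi> h x a"
proof -
  have "bellman_Q \<pi> h x a \<le> R h x a + (\<Sum>y\<in>UNIV. Pt h x a y * bellman_V \<pi> (Suc h) y)"
    using assms(1-3) by (intro bellman_Q_le_of_mem) (auto simp: adversaries_def)
  also have "\<dots> \<le> evalQ H R Pt \<pi> h x a"
    unfolding evalQ_def
    using is_dist_sum_le_add_const[OF adversary_row_dist[OF assms(1,3)], of _ _ 0] assms(4)
    by simp
  finally show ?thesis .
qed

lemma bellman_V_le_evalV:
  assumes "Pt \<in> adversaries H Pstar U" "markov_policy H \<pi>" "1 \<le> h"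
  shows "bellman_V \<pi> h x \<le> evalV H R Pt \<pi> h x"
  using assms(3)
proof (induction "Suc H - h" arbitrary: h x)
  case 0
  then show ?case by (simp add: evalV_beyond_horizon bellman_V_beyond_horizon)
next
  case (Suc k)
  then have h: "h \<in> {1..H}" by auto
  have "bellman_Q \<pi> h x a \<le> evalQ H R Pt \<pi> h x a" for a
    using Suc by (intro bellman_Q_le_evalQ_step[OF assms(1,2) h]) auto
  then show ?case
    using h is_dist_sum_le_add_const[OF markov_policyD[OF assms(2) h], of _ _ 0]
    by (simp add: bellman_V_eq_sum_bellman_Q evalV_eq_sum_evalQ)
qed

definition near_worst_adversary ::
    "(nat \<Rightarrow> 's \<Rightarrow> 'a \<Rightarrow> real) \<Rightarrow> real \<Rightarrow> (nat \<Rightarrow> 's \<Rightarrow> 'a \<Rightarrow> 's \<Rightarrow> real) \<Rightarrow> bool"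
  where
  "near_worst_adversary \<pi> e Pt \<longleftrightarrow> Pt \<in> adversaries H Pstar U \<and>
     (\<forall>h\<in>{1..H}. \<forall>x a.
        R h x a + (\<Sum>y\<in>UNIV. Pt h x a y * bellman_V \<pi> (Suc h) y) \<le> bellman_Q \<pi> h x a + e)"

lemma near_worst_adversary_exists:
  assumes "markov_policy H \<pi>" "0 < e"
  shows "\<exists>Pt. near_worst_adversary \<pi> e Pt"
proof -
  have "\<exists>p. h \<in> {1..H} \<longrightarrow> p \<in> U (Pstar h) x a \<and>
      R h x a + (\<Sum>y\<in>UNIV. p y * bellman_V \<pi> (Suc h) y) \<le> bellman_Q \<pi> h x a + e" for h x a
  proof (cases "h \<in> {1..H}")
    case True
    have "(INF p\<in>U (Pstar h) x a. \<Sum>y\<in>UNIV. p y * bellman_V \<pi> (Suc h) y)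
        < (INF p\<in>U (Pstar h) x a. \<Sum>y\<in>UNIV. p y * bellman_V \<pi> (Suc h) y) + e"
      using assms(2) by simp
    then obtain p where "p \<in> U (Pstar h) x a"
      "(\<Sum>y\<in>UNIV. p y * bellman_V \<pi> (Suc h) y)
        < (INF p\<in>U (Pstar h) x a. \<Sum>y\<in>UNIV. p y * bellman_V \<pi> (Suc h) y) + e"
      using cINF_less_iff[OF robust_set_nonempty[OF True] bdd_below_robust_next_value[OF assms(1)]]
      by blast
    then show ?thesis
      unfolding bellman_Q_def by (intro exI[of _ p]) auto
  qed auto
  then obtain Pt where "\<And>h x a. h \<in> {1..H} \<Longrightarrow> Pt h x a \<in> U (Pstar h) x a \<and>
      R h x a + (\<Sum>y\<in>UNIV. Pt h x a y * bellman_V \<pi> (Suc h) y) \<le> bellman_Q \<pi> h x a + e"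
    by metis
  then show ?thesis
    unfolding near_worst_adversary_def adversaries_def by blast
qed

lemma evalQ_le_bellman_Q_step:
  assumes "near_worst_adversary \<pi> e Pt" "h \<in> {1..H}"
    and "\<And>y. evalV H R Pt \<pi> (Suc h) y \<le> bellman_V \<pi> (Suc h) y + c"
  shows "evalQ H R Pt \<pi> h x a \<le> bellman_Q \<pi> h x a + e + c"
proof -
  have Pt: "Pt \<in> adversaries H Pstar U"
    using assms(1) unfolding near_worst_adversary_def by blast
  have "evalQ H R Pt \<pi> h x a \<le> R h x a + (\<Sum>y\<in>UNIV. Pt h x a y * bellman_V \<pi> (Suc h) y) + c"
    unfolding evalQ_def
    using is_dist_sum_le_add_const[OF adversary_row_dist[OF Pt assms(2)]] assms(3) by simp
  also have "\<dots> \<le> bellman_Q \<pi> h x a + e + c"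
    using assms(1,2) unfolding near_worst_adversary_def by auto
  finally show ?thesis .
qed

lemma evalV_near_worst_le:
  assumes "near_worst_adversary \<pi> e Pt" "markov_policy H \<pi>" "1 \<le> h"
  shows "evalV H R Pt \<pi> h x \<le> bellman_V \<pi> h x + real (Suc H - h) * e"
  using assms(3)
proof (induction "Suc H - h" arbitrary: h x)
  case 0
  then show ?case by (simp add: evalV_beyond_horizon bellman_V_beyond_horizon)
next
  case (Suc k)
  then have h: "h \<in> {1..H}" by auto
  have "evalQ H R Pt \<pi> h x a \<le> bellman_Q \<pi> h x a + e + real (H - h) * e" for a
    using Suc(1)[of "Suc h"] Suc(2)
    by (intro evalQ_le_bellman_Q_step[OF assms(1) h]) (simp del: of_nat_diff)
  then have "evalV H R Pt \<pi> h x \<le> bellman_V \<pi> h x + (e + real (H - h) * e)"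
    using h is_dist_sum_le_add_const[OF markov_policyD[OF assms(2) h]]
    by (simp add: bellman_V_eq_sum_bellman_Q evalV_eq_sum_evalQ add.assoc)
  also have "e + real (H - h) * e = real (Suc H - h) * e"
    using h by (simp add: Suc_diff_le algebra_simps)
  finally show ?case .
qed

lemma robustV_eq_bellman_V:
  assumes "markov_policy H \<pi>" "1 \<le> h"
  shows "robustV H R Pstar U \<pi> h x = bellman_V \<pi> h x"
  unfolding robustV_def
proof (rule cINF_eq_of_approx)
  show "bellman_V \<pi> h x \<le> evalV H R Pt \<pi> h x" if "Pt \<in> adversaries H Pstar U" for Pt
    using bellman_V_le_evalV[OF that assms] .
  fix e :: real assume "0 < e"
  then obtain Pt where "near_worst_adversary \<pi> e Pt"
    using near_worst_adversary_exists[OF assms(1)] by blast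
  then show "\<exists>Pt\<in>adversaries H Pstar U.
      evalV H R Pt \<pi> h x \<le> bellman_V \<pi> h x + real (Suc H - h) * e"
    using evalV_near_worst_le[OF _ assms] unfolding near_worst_adversary_def by blast
qed

lemma robustQ_eq_bellman_Q:
  assumes "markov_policy H \<pi>" "h \<in> {1..H}"
  shows "robustQ H R Pstar U \<pi> h x a = bellman_Q \<pi> h x a"
  unfolding robustQ_def
proof (rule cINF_eq_of_approx)
  show "bellman_Q \<pi> h x a \<le> evalQ H R Pt \<pi> h x a" if "Pt \<in> adversaries H Pstar U" for Pt
    using bellman_V_le_evalV[OF that assms(1)]
    by (intro bellman_Q_le_evalQ_step[OF that assms]) simp
  fix e :: real assume "0 < e"
  then obtain Pt where Pt: "near_worst_adversary \<pi> e Pt"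
    using near_worst_adversary_exists[OF assms(1)] by blast
  have "evalQ H R Pt \<pi> h x a \<le> bellman_Q \<pi> h x a + e + real (H - h) * e"
    using evalV_near_worst_le[OF Pt assms(1), of "Suc h"]
    by (intro evalQ_le_bellman_Q_step[OF Pt assms(2)]) (simp del: of_nat_diff)
  then show "\<exists>Pt\<in>adversaries H Pstar U.
      evalQ H R Pt \<pi> h x a \<le> bellman_Q \<pi> h x a + (1 + real (H - h)) * e"
    using Pt unfolding near_worst_adversary_def by (auto simp: algebra_simps)
qed

lemma bellman_V_diff_ge:
  assumes "markov_policy H \<pi>'" "markov_policy H \<pi>" "h \<in> {1..H}"
    and worst_mem: "\<And>a. P a \<in> U (Pstar h) x a"
    and worst_min: "\<And>a p. p \<in> U (Pstar h) x a \<Longrightarrow>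
      (\<Sum>y\<in>UNIV. P a y * bellman_V \<pi>' (Suc h) y) \<le> (\<Sum>y\<in>UNIV. p y * bellman_V \<pi>' (Suc h) y)"
  shows "(\<Sum>a\<in>UNIV. (\<pi>' h x a - \<pi> h x a) * bellman_Q \<pi> h x a)
      + (\<Sum>a\<in>UNIV. \<pi>' h x a *
          (\<Sum>y\<in>UNIV. P a y * (bellman_V \<pi>' (Suc h) y - bellman_V \<pi> (Suc h) y)))
    \<le> bellman_V \<pi>' h x - bellman_V \<pi> h x"
proof -
  have "(\<Sum>y\<in>UNIV. P a y * (bellman_V \<pi>' (Suc h) y - bellman_V \<pi> (Suc h) y))
      \<le> bellman_Q \<pi>' h x a - bellman_Q \<pi> h x a" for a
  proof -
    have "(\<Sum>y\<in>UNIV. P a y * (bellman_V \<pi>' (Suc h) y - bellman_V \<pi> (Suc h) y))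
        = (R h x a + (\<Sum>y\<in>UNIV. P a y * bellman_V \<pi>' (Suc h) y))
          - (R h x a + (\<Sum>y\<in>UNIV. P a y * bellman_V \<pi> (Suc h) y))"
      by (simp add: right_diff_distrib sum_subtractf)
    also have "\<dots> \<le> bellman_Q \<pi>' h x a - bellman_Q \<pi> h x a"
      using bellman_Q_ge_of_minimal[OF assms(3) worst_min] bellman_Q_le_of_mem[OF assms(2) worst_mem]
      by (rule diff_mono)
    finally show ?thesis .
  qed
  then have "(\<Sum>a\<in>UNIV. \<pi>' h x a *
        (\<Sum>y\<in>UNIV. P a y * (bellman_V \<pi>' (Suc h) y - bellman_V \<pi> (Suc h) y)))
      \<le> (\<Sum>a\<in>UNIV. \<pi>' h x a * (bellman_Q \<pi>' h x a - bellman_Q \<pi> h x a))"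
    using is_dist_nonneg[OF markov_policyD[OF assms(1,3)]] by (intro sum_mono mult_left_mono)
  moreover have "bellman_V \<pi>' h x - bellman_V \<pi> h x
      = (\<Sum>a\<in>UNIV. (\<pi>' h x a - \<pi> h x a) * bellman_Q \<pi> h x a)
        + (\<Sum>a\<in>UNIV. \<pi>' h x a * (bellman_Q \<pi>' h x a - bellman_Q \<pi> h x a))"
    using assms(3) by (simp add: bellman_V_eq_sum_bellman_Q algebra_simps sum_subtractf sum.distrib)
  ultimately show ?thesis by linarith
qed

end

lemma occ_nonneg:
  assumes "\<And>h x a y. h \<in> {1..H} \<Longrightarrow> 0 \<le> P h x a y"
    and "\<And>h x a. h \<in> {1..H} \<Longrightarrow> 0 \<le> \<pi> h x a"
    and "k \<le> H"
  shows "0 \<le> occ P \<pi> s k y"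
  using assms(3) by (induction k arbitrary: y) (auto intro!: sum_nonneg mult_nonneg_nonneg assms(1,2))

lemma sum_occ_Suc:
  "(\<Sum>x\<in>UNIV. occ P \<pi> s k x * (\<Sum>a\<in>UNIV. \<pi> (Suc k) x a * (\<Sum>y\<in>UNIV. P (Suc k) x a y * f y)))
    = (\<Sum>y\<in>UNIV. occ P \<pi> s (Suc k) y * f y)"
proof -
  define t where "t x a y = occ P \<pi> s k x * \<pi> (Suc k) x a * P (Suc k) x a y * f y" for x a y
  have "(\<Sum>y\<in>UNIV. occ P \<pi> s (Suc k) y * f y) = (\<Sum>y\<in>UNIV. \<Sum>x\<in>UNIV. \<Sum>a\<in>UNIV. t x a y)"
    unfolding t_def by (simp add: sum_distrib_right)
  also have "\<dots> = (\<Sum>x\<in>UNIV. \<Sum>a\<in>UNIV. \<Sum>y\<in>UNIV. t x a y)"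
    by (subst sum.swap) (rule sum.cong[OF refl sum.swap])
  finally show ?thesis
    unfolding t_def by (simp add: sum_distrib_left mult.assoc)
qed

lemma traj_exp_le_of_step:
  fixes P :: "nat \<Rightarrow> 's::finite \<Rightarrow> 'a::finite \<Rightarrow> 's \<Rightarrow> real"
  assumes P_nonneg: "\<And>h x a y. h \<in> {1..H} \<Longrightarrow> 0 \<le> P h x a y"
    and \<pi>_nonneg: "\<And>h x a. h \<in> {1..H} \<Longrightarrow> 0 \<le> \<pi> h x a"
    and step: "\<And>h x. h \<in> {1..H} \<Longrightarrow>
      g h x + (\<Sum>a\<in>UNIV. \<pi> h x a * (\<Sum>y\<in>UNIV. P h x a y * D (Suc h) y)) \<le> D h x"
    and terminal: "\<And>x. 0 \<le> D (Suc H) x"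
  shows "traj_exp H P \<pi> s g \<le> D 1 s"
proof -
  have unrolled: "(\<Sum>h=1..k. \<Sum>y\<in>UNIV. occ P \<pi> s (h - 1) y * g h y)
      + (\<Sum>y\<in>UNIV. occ P \<pi> s k y * D (Suc k) y) \<le> D 1 s" if "k \<le> H" for k
    using that
  proof (induction k)
    case 0
    show ?case by (simp add: if_distrib[of "\<lambda>c. c * _"] cong: if_cong)
  next
    case (Suc k)
    have k: "Suc k \<in> {1..H}" using Suc.prems by auto
    have "(\<Sum>y\<in>UNIV. occ P \<pi> s k y * g (Suc k) y)
        + (\<Sum>y\<in>UNIV. occ P \<pi> s (Suc k) y * D (Suc (Suc k)) y)
      = (\<Sum>y\<in>UNIV. occ P \<pi> s k y * (g (Suc k) y
          + (\<Sum>a\<in>UNIV. \<pi> (Suc k) y a * (\<Sum>y'\<in>UNIV. P (Suc k) y a y' * D (Suc (Suc k)) y'))))"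
      by (simp add: sum_occ_Suc distrib_left sum.distrib del: occ.simps)
    also have "\<dots> \<le> (\<Sum>y\<in>UNIV. occ P \<pi> s k y * D (Suc k) y)"
      using step[OF k] occ_nonneg[of H P \<pi>, OF P_nonneg \<pi>_nonneg, of k] Suc.prems
      by (intro sum_mono mult_left_mono) auto
    finally show ?case
      using Suc by (simp add: sum.cl_ivl_Suc)
  qed
  have "0 \<le> (\<Sum>y\<in>UNIV. occ P \<pi> s H y * D (Suc H) y)"
    using occ_nonneg[of H P \<pi>, OF P_nonneg \<pi>_nonneg] terminal by (intro sum_nonneg mult_nonneg_nonneg) auto
  then show ?thesis
    using unrolled[of H] unfolding traj_exp_def by linarith
qed

theorem lemma2:
  fixes H :: nat
    and R :: "nat \<Rightarrow> 's::finite \<Rightarrow> 'a::finite \<Rightarrow> real"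
    and Pstar :: "nat \<Rightarrow> 's \<Rightarrow> 'a \<Rightarrow> 's \<Rightarrow> real"
    and U :: "('s \<Rightarrow> 'a \<Rightarrow> 's \<Rightarrow> real) \<Rightarrow> 's \<Rightarrow> 'a \<Rightarrow> ('s \<Rightarrow> real) set"
    and \<pi>star \<pi> :: "nat \<Rightarrow> 's \<Rightarrow> 'a \<Rightarrow> real"
    and Pdag :: "nat \<Rightarrow> 's \<Rightarrow> 'a \<Rightarrow> 's \<Rightarrow> real"
    and s :: 's
  assumes R_range: "\<forall>h\<in>{1..H}. \<forall>x b. 0 \<le> R h x b \<and> R h x b \<le> 1"
    and Pstar_kernel: "kernel H Pstar"
    and U_dist: "\<forall>Q x b. \<forall>p\<in>U Q x b. is_dist p"
    and pistar_markov: "markov_policy H \<pi>star"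
    and pistar_opt: "\<forall>\<pi>'. markov_policy H \<pi>' \<longrightarrow>
          (\<forall>x. robustV H R Pstar U \<pi>' 1 x \<le> robustV H R Pstar U \<pi>star 1 x)"
    and Pdag_in: "\<forall>h\<in>{1..H}. \<forall>x b. Pdag h x b \<in> U (Pstar h) x b"
    and Pdag_min: "\<forall>h\<in>{1..H}. \<forall>x b. \<forall>p\<in>U (Pstar h) x b.
          (\<Sum>y\<in>UNIV. Pdag h x b y * robustV H R Pstar U \<pi>star (Suc h) y)
          \<le> (\<Sum>y\<in>UNIV. p y * robustV H R Pstar U \<pi>star (Suc h) y)"
    and pi_markov: "markov_policy H \<pi>"
  shows "robustV H R Pstar U \<pi>star 1 s - robustV H R Pstar U \<pi> 1 s \<ge>
    traj_exp H Pdag \<pi>star s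
      (\<lambda>h y. \<Sum>a\<in>UNIV. (\<pi>star h y a - \<pi> h y a) * robustQ H R Pstar U \<pi> h y a)"
proof -
  interpret robust_mdp H R Pstar U
    using R_range U_dist Pdag_in by unfold_locales blast+
  have "traj_exp H Pdag \<pi>star s
      (\<lambda>h y. \<Sum>a\<in>UNIV. (\<pi>star h y a - \<pi> h y a) * robustQ H R Pstar U \<pi> h y a)
    \<le> bellman_V \<pi>star 1 s - bellman_V \<pi> 1 s"
  proof (rule traj_exp_le_of_step)
    fix h x a y assume h: "h \<in> {1..H}"
    show "0 \<le> Pdag h x a y"
      using Pdag_in U_dist h by (meson is_dist_nonneg)
    show "0 \<le> \<pi>star h x a"
      using is_dist_nonneg[OF markov_policyD[OF pistar_markov h]] .
    show "(\<Sum>a\<in>UNIV. (\<pi>star h x a - \<pi> h x a) * robustQ H R Pstar U \<pi> h x a)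
        + (\<Sum>a\<in>UNIV. \<pi>star h x a *
            (\<Sum>y\<in>UNIV. Pdag h x a y * (bellman_V \<pi>star (Suc h) y - bellman_V \<pi> (Suc h) y)))
      \<le> bellman_V \<pi>star h x - bellman_V \<pi> h x"
      using bellman_V_diff_ge[OF pistar_markov pi_markov h, of "Pdag h x"] Pdag_in Pdag_min h
      by (simp add: robustQ_eq_bellman_Q[OF pi_markov h] robustV_eq_bellman_V[OF pistar_markov])
  next
    show "0 \<le> bellman_V \<pi>star (Suc H) x - bellman_V \<pi> (Suc H) x" for x
      by (simp add: bellman_V_beyond_horizon)
  qed
  then show ?thesis
    by (simp add: robustV_eq_bellman_V[OF pistar_markov] robustV_eq_bellman_V[OF pi_markov])
qed

end
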